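(* Let $\omega\in(0,\pi/2]$ and let $S$ be a moving sofa with rotation angle $\omega$ in standard position. Then its monotonization $\mathcal{M}(S)=P_\omega\cap\bigcap_{0\le t\le\omega}L_S(t)$ is connected.
   Context: For $t\in\mathbb{R}$ put $u_t=(\cos t,\sin t)$, $v_t=(-\sin t,\cos t)$; $R_t$ is counterclockwise rotation about the origin by $t$. For a nonempty compact $S$, $p_S(t)=\max_{p\in S}p\cdot u_t$. The hallway is $L=((-\infty,1]\times[0,1])\cup([0,1]\times(-\infty,1])$, $L_H=(-\infty,1]\times[0,1]$, $L_V=[0,1]\times(-\infty,1]$. A moving sofa is a connected, nonempty, compact $S\subset\mathbb{R}^2$ such that some translate of $S$ lies in $L_H$ and can be moved by a continuous rigid motion inside $L$ to a subset of $L_V$; its rotation angle $\omega\in(0,\pi/2]$ is the total clockwise angle rotated in this motion (regarded as fixed data of the sofa). It is in standard position if $p_S(\omega)=p_S(\pi/2)=1$. Let $H=\mathbb{R}\times[0,1]$, $V=[0,1]\times\mathbb{R}$, $P_\omega=H\cap R_\omega(V)$, and $L_S(t)=R_t(L)+(p_S(t)-1)u_t+(p_S(t+\pi/2)-1)v_t$. *)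

theory Defs
  imports "HOL-Analysis.Analysis"
begin

definition u_dir :: "real \<Rightarrow> real \<times> real" where
  "u_dir t = (cos t, sin t)"

definition v_dir :: "real \<Rightarrow> real \<times> real" where
  "v_dir t = (- sin t, cos t)"

definition rot :: "real \<Rightarrow> real \<times> real \<Rightarrow> real \<times> real" where
  "rot t p = (fst p * cos t - snd p * sin t, fst p * sin t + snd p * cos t)"

definition supp_fun :: "(real \<times> real) set \<Rightarrow> real \<Rightarrow> real" where
  "supp_fun S t = Sup ((\<lambda>p. p \<bullet> u_dir t) ` S)"

definition hallway_H :: "(real \<times> real) set" where
  "hallway_H = {p. fst p \<le> 1 \<and> 0 \<le> snd p \<and> snd p \<le> 1}"

definition hallway_V :: "(real \<times> real) set" where
  "hallway_V = {p. 0 \<le> fst p \<and> fst p \<le> 1 \<and> snd p \<le> 1}"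

definition hallway :: "(real \<times> real) set" where
  "hallway = hallway_H \<union> hallway_V"

definition moving_sofa :: "(real \<times> real) set \<Rightarrow> real \<Rightarrow> bool" where
  "moving_sofa S \<omega> \<longleftrightarrow>
     connected S \<and> S \<noteq> {} \<and> compact S \<and> 0 < \<omega> \<and> \<omega> \<le> pi / 2 \<and>
     (\<exists>(\<theta>::real \<Rightarrow> real) (x::real \<Rightarrow> real \<times> real).
        continuous_on {0..1} \<theta> \<and> continuous_on {0..1} x \<and>
        \<theta> 0 = 0 \<and> \<theta> 1 = - \<omega> \<and>
        (\<lambda>p. p + x 0) ` S \<subseteq> hallway_H \<and>
        (\<forall>s\<in>{0..1}. (\<lambda>p. rot (\<theta> s) p + x s) ` S \<subseteq> hallway) \<and>
        (\<lambda>p. rot (\<theta> 1) p + x 1) ` S \<subseteq> hallway_V)"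

definition standard_position :: "(real \<times> real) set \<Rightarrow> real \<Rightarrow> bool" where
  "standard_position S \<omega> \<longleftrightarrow> supp_fun S \<omega> = 1 \<and> supp_fun S (pi / 2) = 1"

definition strip_H :: "(real \<times> real) set" where
  "strip_H = {p. 0 \<le> snd p \<and> snd p \<le> 1}"

definition strip_V :: "(real \<times> real) set" where
  "strip_V = {p. 0 \<le> fst p \<and> fst p \<le> 1}"

definition P_set :: "real \<Rightarrow> (real \<times> real) set" where
  "P_set \<omega> = strip_H \<inter> rot \<omega> ` strip_V"

definition L_S :: "(real \<times> real) set \<Rightarrow> real \<Rightarrow> (real \<times> real) set" where
  "L_S S t = (\<lambda>p. p + (supp_fun S t - 1) *\<^sub>R u_dir t
                    + (supp_fun S (t + pi / 2) - 1) *\<^sub>R v_dir t) ` (rot t ` hallway)"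

definition monotonization :: "(real \<times> real) set \<Rightarrow> real \<Rightarrow> (real \<times> real) set" where
  "monotonization S \<omega> = P_set \<omega> \<inter> (\<Inter>t\<in>{0..\<omega>}. L_S S t)"

end

theory Submission
  imports Defs
begin

text \<open>
  The monotonization is the cap \<open>K = P\<^sub>\<omega> \<inter> \<Inter>\<^sub>t {p \<bullet> u\<^sub>t \<le> p\<^sub>S(t), p \<bullet> v\<^sub>t \<le> p\<^sub>S(t + \<pi>/2)}\<close>,
  a compact convex set, minus the open inner quadrants
  \<open>Q\<^sub>t = {p \<bullet> u\<^sub>t < p\<^sub>S(t) - 1, p \<bullet> v\<^sub>t < p\<^sub>S(t + \<pi>/2) - 1}\<close> of the hallways \<open>L\<^sub>S(t)\<close>.
  For \<open>t \<in> [0, \<pi>/2]\<close> both \<open>u\<^sub>t\<close> and \<open>v\<^sub>t\<close> point upwards, so each \<open>Q\<^sub>t\<close> is closed under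
  moving down and every vertical fibre of the monotonization is convex. Its projection to the
  first axis is that of \<open>K\<close>: the top point \<open>q\<close> of a vertical fibre of \<open>K\<close> lies in no \<open>Q\<^sub>t\<close>.
  Indeed, a supporting line of \<open>K\<close> at \<open>q\<close> has an upward normal and lies above the sofa \<open>S\<close>;
  the points of \<open>S\<close> touching the two outer walls of \<open>L\<^sub>S(t)\<close> force its normal into the
  quadrant spanned by \<open>u\<^sub>t\<close> and \<open>v\<^sub>t\<close>. Being connected, \<open>S\<close> also meets the outer corner
  region \<open>{p \<bullet> u\<^sub>t \<ge> p\<^sub>S(t) - 1, p \<bullet> v\<^sub>t \<ge> p\<^sub>S(t + \<pi>/2) - 1}\<close>, whose points lie strictly
  above the line if \<open>q \<in> Q\<^sub>t\<close>. A compact set whose projection and fibres are connected is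
  connected.
\<close>

section \<open>Rotated frames and support functions\<close>

lemma inner_u_dir: "p \<bullet> u_dir t = fst p * cos t + snd p * sin t"
  by (simp add: u_dir_def inner_prod_def)

lemma inner_v_dir: "p \<bullet> v_dir t = snd p * cos t - fst p * sin t"
  by (simp add: v_dir_def inner_prod_def)

lemma inner_u_dir_pi_half: "p \<bullet> u_dir (pi / 2) = snd p"
  by (simp add: inner_u_dir)

lemma u_dir_add_pi_half: "u_dir (t + pi / 2) = v_dir t"
  by (simp add: u_dir_def v_dir_def cos_add sin_add)

lemma rot_neg_eq: "rot (- t) p = (p \<bullet> u_dir t, p \<bullet> v_dir t)"
  by (simp add: rot_def inner_u_dir inner_v_dir algebra_simps)

lemma rot_diff: "rot t (p - q) = rot t p - rot t q"
  by (simp add: rot_def algebra_simps)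

lemma rot_rot_neg: "rot t (rot (- t) p) = p"
  using sin_cos_squared_add[of t] unfolding rot_def prod_eq_iff fst_conv snd_conv cos_minus sin_minus
  by algebra

lemma rot_eq_u_v: "rot t (a, b) = a *\<^sub>R u_dir t + b *\<^sub>R v_dir t"
  by (simp add: rot_def u_dir_def v_dir_def algebra_simps)

lemma frame_expansion: "p = (p \<bullet> u_dir t) *\<^sub>R u_dir t + (p \<bullet> v_dir t) *\<^sub>R v_dir t"
  using rot_rot_neg[of t p] by (simp add: rot_neg_eq rot_eq_u_v)

lemma closed_inner_le: "closed {p. p \<bullet> a \<le> c}"
  and closed_inner_ge: "closed {p. c \<le> p \<bullet> a}"
  for a :: "'a::real_inner"
  by (intro closed_Collect_le continuous_intros)+

lemma convex_inner_le: "convex {p. p \<bullet> a \<le> c}"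
  and convex_inner_ge: "convex {p. c \<le> p \<bullet> a}"
  for a :: "'a::real_inner"
  using convex_halfspace_le[of a c] convex_halfspace_ge[of c a] by (simp_all add: inner_commute)

lemma supp_fun_upper: "compact S \<Longrightarrow> p \<in> S \<Longrightarrow> p \<bullet> u_dir t \<le> supp_fun S t"
  unfolding supp_fun_def
  by (intro cSup_upper imageI bounded_imp_bdd_above compact_imp_bounded
      compact_continuous_image continuous_intros)

lemma supp_fun_least: "S \<noteq> {} \<Longrightarrow> (\<And>p. p \<in> S \<Longrightarrow> p \<bullet> u_dir t \<le> c) \<Longrightarrow> supp_fun S t \<le> c"
  unfolding supp_fun_def by (rule cSup_least) auto

lemma supp_fun_attained:
  assumes "compact S" "S \<noteq> {}"
  obtains p where "p \<in> S" "p \<bullet> u_dir t = supp_fun S t"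
proof -
  have "compact ((\<lambda>p. p \<bullet> u_dir t) ` S)"
    using assms(1) by (intro compact_continuous_image continuous_intros)
  then obtain p where "p \<in> S" "\<And>q. q \<in> S \<Longrightarrow> q \<bullet> u_dir t \<le> p \<bullet> u_dir t"
    using compact_attains_sup[of "(\<lambda>p. p \<bullet> u_dir t) ` S"] assms(2) by auto
  then have "p \<bullet> u_dir t = supp_fun S t"
    using supp_fun_upper[OF assms(1)] supp_fun_least[OF assms(2)] by (meson order.antisym)
  with \<open>p \<in> S\<close> show thesis by (rule that)
qed

lemma mem_translation_image_iff: "p \<in> (\<lambda>x. x + d) ` A \<longleftrightarrow> p - d \<in> A"
  for d :: "'a::ab_group_add"
  by (auto intro: image_eqI[where x = "p - d"])

lemma mem_rot_image_iff: "p \<in> rot t ` A \<longleftrightarrow> rot (- t) p \<in> A"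
  using rot_rot_neg[of t p] rot_rot_neg[of "- t"] by force

section \<open>The sofa inside the hallways\<close>

lemma hallway_iff: "h \<in> hallway \<longleftrightarrow> fst h \<le> 1 \<and> snd h \<le> 1 \<and> (0 \<le> fst h \<or> 0 \<le> snd h)"
  unfolding hallway_def hallway_H_def hallway_V_def by auto

lemma mem_L_S_iff:
  "p \<in> L_S S t \<longleftrightarrow> p \<bullet> u_dir t \<le> supp_fun S t \<and> p \<bullet> v_dir t \<le> supp_fun S (t + pi / 2) \<and>
     (supp_fun S t - 1 \<le> p \<bullet> u_dir t \<or> supp_fun S (t + pi / 2) - 1 \<le> p \<bullet> v_dir t)"
proof -
  define c where "c = (supp_fun S t - 1, supp_fun S (t + pi / 2) - 1)"
  have "L_S S t = (\<lambda>p. p + rot t c) ` rot t ` hallway"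
    by (simp add: L_S_def c_def rot_eq_u_v add.assoc)
  then have "p \<in> L_S S t \<longleftrightarrow> rot (- t) p - c \<in> hallway"
    using rot_rot_neg[of "- t" c] by (simp add: mem_translation_image_iff mem_rot_image_iff rot_diff)
  then show ?thesis
    by (auto simp: c_def hallway_iff rot_neg_eq)
qed

lemma mem_P_set_iff:
  "p \<in> P_set \<omega> \<longleftrightarrow> 0 \<le> snd p \<and> snd p \<le> 1 \<and> 0 \<le> p \<bullet> u_dir \<omega> \<and> p \<bullet> u_dir \<omega> \<le> 1"
  by (auto simp: P_set_def strip_H_def strip_V_def mem_rot_image_iff rot_neg_eq)

lemma rotated_placement_subset_L_S:
  assumes "compact S" "S \<noteq> {}" and placed: "(\<lambda>p. rot (- t) p + c) ` S \<subseteq> hallway"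
  shows "S \<subseteq> L_S S t"
proof
  fix p
  assume "p \<in> S"
  have bounds: "q \<bullet> u_dir t + fst c \<le> 1 \<and> q \<bullet> v_dir t + snd c \<le> 1 \<and>
      (0 \<le> q \<bullet> u_dir t + fst c \<or> 0 \<le> q \<bullet> v_dir t + snd c)" if "q \<in> S" for q
    using placed that by (auto simp: hallway_iff rot_neg_eq)
  have "supp_fun S t \<le> 1 - fst c"
  proof (rule supp_fun_least[OF assms(2)])
    show "q \<bullet> u_dir t \<le> 1 - fst c" if "q \<in> S" for q
      using bounds[OF that] by linarith
  qed
  moreover have "supp_fun S (t + pi / 2) \<le> 1 - snd c"
  proof (rule supp_fun_least[OF assms(2)])
    show "q \<bullet> u_dir (t + pi / 2) \<le> 1 - snd c" if "q \<in> S" for q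
      using bounds[OF that] by (simp add: u_dir_add_pi_half)
  qed
  ultimately show "p \<in> L_S S t"
    using bounds[OF \<open>p \<in> S\<close>] supp_fun_upper[OF assms(1) \<open>p \<in> S\<close>, of t]
      supp_fun_upper[OF assms(1) \<open>p \<in> S\<close>, of "t + pi / 2"]
    unfolding mem_L_S_iff u_dir_add_pi_half by linarith
qed

lemma in_strip_if_supp_fun_eq_1:
  assumes "compact S" "S \<noteq> {}" "supp_fun S t = 1"
    and strip: "\<And>q. q \<in> S \<Longrightarrow> 0 \<le> q \<bullet> u_dir t + b \<and> q \<bullet> u_dir t + b \<le> 1"
    and "p \<in> S"
  shows "0 \<le> p \<bullet> u_dir t \<and> p \<bullet> u_dir t \<le> 1"
proof -
  have "supp_fun S t \<le> 1 - b"
  proof (rule supp_fun_least[OF assms(2)])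
    fix q
    assume "q \<in> S"
    with strip show "q \<bullet> u_dir t \<le> 1 - b"
      by fastforce
  qed
  then show ?thesis
    using strip[OF \<open>p \<in> S\<close>] supp_fun_upper[OF assms(1) \<open>p \<in> S\<close>, of t] assms(3) by linarith
qed

lemma moving_sofaE:
  assumes "moving_sofa S \<omega>"
  obtains \<theta> :: "real \<Rightarrow> real" and x :: "real \<Rightarrow> real \<times> real"
  where "continuous_on {0..1} \<theta>" "\<theta> 0 = 0" "\<theta> 1 = - \<omega>"
    "(\<lambda>p. p + x 0) ` S \<subseteq> hallway_H"
    "\<And>s. s \<in> {0..1} \<Longrightarrow> (\<lambda>p. rot (\<theta> s) p + x s) ` S \<subseteq> hallway"
    "(\<lambda>p. rot (\<theta> 1) p + x 1) ` S \<subseteq> hallway_V"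
  using assms unfolding moving_sofa_def by metis

lemma moving_sofa_rotated_placement:
  assumes "moving_sofa S \<omega>" "t \<in> {0..\<omega>}"
  obtains c where "(\<lambda>p. rot (- t) p + c) ` S \<subseteq> hallway"
proof -
  obtain \<theta> :: "real \<Rightarrow> real" and x :: "real \<Rightarrow> real \<times> real"
    where "continuous_on {0..1} \<theta>" "\<theta> 0 = 0" "\<theta> 1 = - \<omega>"
    and placed: "\<And>s. s \<in> {0..1} \<Longrightarrow> (\<lambda>p. rot (\<theta> s) p + x s) ` S \<subseteq> hallway"
    using assms(1) by (rule moving_sofaE) blast
  then obtain s where s: "s \<in> {0..1}" "\<theta> s = - t"
    using IVT2'[of \<theta> 1 "- t" 0] assms(2) by auto
  show thesis
    using placed[OF s(1)] s(2) by (intro that[of "x s"]) simp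
qed

lemma moving_sofa_subset_P_set:
  assumes "moving_sofa S \<omega>" "standard_position S \<omega>"
  shows "S \<subseteq> P_set \<omega>"
proof
  fix p
  assume "p \<in> S"
  have S: "compact S" "S \<noteq> {}"
    using assms(1) by (simp_all add: moving_sofa_def)
  obtain \<theta> :: "real \<Rightarrow> real" and x :: "real \<Rightarrow> real \<times> real"
    where "\<theta> 1 = - \<omega>"
    and start: "(\<lambda>p. p + x 0) ` S \<subseteq> hallway_H"
    and final: "(\<lambda>p. rot (\<theta> 1) p + x 1) ` S \<subseteq> hallway_V"
    using assms(1) by (rule moving_sofaE) blast
  have "0 \<le> p \<bullet> u_dir (pi / 2) \<and> p \<bullet> u_dir (pi / 2) \<le> 1"
    using start assms(2) \<open>p \<in> S\<close>
    by (intro in_strip_if_supp_fun_eq_1[OF S, where b = "snd (x 0)"])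
      (auto simp: standard_position_def hallway_H_def inner_u_dir_pi_half)
  moreover have "0 \<le> p \<bullet> u_dir \<omega> \<and> p \<bullet> u_dir \<omega> \<le> 1"
    using final \<open>\<theta> 1 = - \<omega>\<close> assms(2) \<open>p \<in> S\<close>
    by (intro in_strip_if_supp_fun_eq_1[OF S, where b = "fst (x 1)"])
      (auto simp: standard_position_def hallway_V_def rot_neg_eq)
  ultimately show "p \<in> P_set \<omega>"
    by (simp add: mem_P_set_iff inner_u_dir_pi_half)
qed

lemma moving_sofa_subset_monotonization:
  assumes "moving_sofa S \<omega>" "standard_position S \<omega>"
  shows "S \<subseteq> monotonization S \<omega>"
proof -
  have S: "compact S" "S \<noteq> {}"
    using assms(1) by (simp_all add: moving_sofa_def)
  have "S \<subseteq> L_S S t" if "t \<in> {0..\<omega>}" for t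
    using moving_sofa_rotated_placement[OF assms(1) that] rotated_placement_subset_L_S[OF S] by metis
  then show ?thesis
    using moving_sofa_subset_P_set[OF assms] unfolding monotonization_def by blast
qed

lemma connected_subset_L_S_meets_corner:
  assumes "connected S" "compact S" "S \<noteq> {}" "S \<subseteq> L_S S t"
  obtains z where "z \<in> S" "supp_fun S t - 1 \<le> z \<bullet> u_dir t"
    "supp_fun S (t + pi / 2) - 1 \<le> z \<bullet> v_dir t"
proof -
  define C1 where "C1 = {p. supp_fun S t - 1 \<le> p \<bullet> u_dir t}"
  define C2 where "C2 = {p. supp_fun S (t + pi / 2) - 1 \<le> p \<bullet> v_dir t}"
  have "S \<subseteq> C1 \<union> C2"
    using assms(4) by (auto simp: C1_def C2_def mem_L_S_iff)
  moreover have "C1 \<inter> S \<noteq> {}"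
  proof -
    obtain w where "w \<in> S" "w \<bullet> u_dir t = supp_fun S t"
      using supp_fun_attained[OF assms(2,3)] .
    then have "w \<in> C1 \<inter> S"
      by (simp add: C1_def)
    then show ?thesis
      by blast
  qed
  moreover have "C2 \<inter> S \<noteq> {}"
  proof -
    obtain e where "e \<in> S" "e \<bullet> u_dir (t + pi / 2) = supp_fun S (t + pi / 2)"
      using supp_fun_attained[OF assms(2,3)] .
    then have "e \<in> C2 \<inter> S"
      by (simp add: C2_def u_dir_add_pi_half)
    then show ?thesis
      by blast
  qed
  moreover have "closed C1" "closed C2"
    unfolding C1_def C2_def by (rule closed_inner_ge)+
  ultimately have "C1 \<inter> C2 \<inter> S \<noteq> {}"
    using connected_closedD[OF assms(1)] by blast
  then show thesis
    using that by (auto simp: C1_def C2_def)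
qed

section \<open>The cap and the inner quadrants\<close>

definition cap :: "(real \<times> real) set \<Rightarrow> real \<Rightarrow> (real \<times> real) set" where
  "cap S \<omega> = P_set \<omega> \<inter>
     (\<Inter>t\<in>{0..\<omega>}. {p. p \<bullet> u_dir t \<le> supp_fun S t} \<inter> {p. p \<bullet> v_dir t \<le> supp_fun S (t + pi / 2)})"

definition inner_quadrant :: "(real \<times> real) set \<Rightarrow> real \<Rightarrow> (real \<times> real) set" where
  "inner_quadrant S t =
     {p. p \<bullet> u_dir t < supp_fun S t - 1 \<and> p \<bullet> v_dir t < supp_fun S (t + pi / 2) - 1}"

lemma monotonization_eq_cap_Diff:
  "monotonization S \<omega> = cap S \<omega> - (\<Union>t\<in>{0..\<omega>}. inner_quadrant S t)"
  by (auto simp: monotonization_def cap_def inner_quadrant_def mem_L_S_iff not_less)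

lemma P_set_eq_halfplanes:
  "P_set \<omega> = {p. 0 \<le> p \<bullet> u_dir (pi / 2)} \<inter> {p. p \<bullet> u_dir (pi / 2) \<le> 1} \<inter>
     {p. 0 \<le> p \<bullet> u_dir \<omega>} \<inter> {p. p \<bullet> u_dir \<omega> \<le> 1}"
  by (auto simp: mem_P_set_iff inner_u_dir_pi_half)

lemma closed_cap: "closed (cap S \<omega>)"
  unfolding cap_def P_set_eq_halfplanes
  by (intro closed_Int closed_INT ballI closed_inner_le closed_inner_ge)

lemma convex_cap: "convex (cap S \<omega>)"
  unfolding cap_def P_set_eq_halfplanes
  by (intro convex_Int convex_INT ballI convex_inner_le convex_inner_ge)

lemma bounded_cap:
  assumes "0 < \<omega>" "\<omega> \<le> pi / 2"
  shows "bounded (cap S \<omega>)"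
proof -
  have "cap S \<omega> \<subseteq> {- supp_fun S (\<omega> + pi / 2) / sin \<omega> .. supp_fun S 0} \<times> {0..1}"
  proof
    fix p
    assume "p \<in> cap S \<omega>"
    then have y: "0 \<le> snd p" "snd p \<le> 1" and "p \<bullet> u_dir 0 \<le> supp_fun S 0"
      and v: "p \<bullet> v_dir \<omega> \<le> supp_fun S (\<omega> + pi / 2)"
      using assms by (auto simp: cap_def mem_P_set_iff)
    moreover have "0 < sin \<omega>" "0 \<le> cos \<omega>"
      using assms by (auto intro: sin_gt_zero cos_ge_zero)
    moreover from this y v have "- supp_fun S (\<omega> + pi / 2) \<le> fst p * sin \<omega>"
      unfolding inner_v_dir by (smt (verit) mult_nonneg_nonneg)
    then have "- supp_fun S (\<omega> + pi / 2) / sin \<omega> \<le> fst p"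
      using \<open>0 < sin \<omega>\<close> by (simp only: pos_divide_le_eq)
    ultimately show "p \<in> {- supp_fun S (\<omega> + pi / 2) / sin \<omega> .. supp_fun S 0} \<times> {0..1}"
      by (simp add: inner_u_dir mem_Times_iff divide_le_eq)
  qed
  then show ?thesis
    by (rule bounded_subset[OF compact_imp_bounded[OF compact_Times[OF compact_Icc compact_Icc]]])
qed

lemma compact_cap: "0 < \<omega> \<Longrightarrow> \<omega> \<le> pi / 2 \<Longrightarrow> compact (cap S \<omega>)"
  by (simp add: compact_eq_bounded_closed bounded_cap closed_cap)

lemma open_inner_quadrant: "open (inner_quadrant S t)"
  unfolding inner_quadrant_def by (intro open_Collect_conj open_Collect_less continuous_intros)

lemma compact_monotonization: "0 < \<omega> \<Longrightarrow> \<omega> \<le> pi / 2 \<Longrightarrow> compact (monotonization S \<omega>)"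
  unfolding monotonization_eq_cap_Diff compact_eq_bounded_closed
  by (intro conjI bounded_diff bounded_cap closed_Diff closed_cap open_UN ballI open_inner_quadrant)

section \<open>Vertical fibres of the monotonization\<close>

lemma inner_quadrant_downward_closed:
  assumes "0 \<le> t" "t \<le> pi / 2" "p \<in> inner_quadrant S t" "0 \<le> h"
  shows "p - (0, h) \<in> inner_quadrant S t"
proof -
  have "0 \<le> sin t" "0 \<le> cos t"
    using assms(1,2) by (auto intro!: sin_ge_zero cos_ge_zero)
  then have "0 \<le> h * sin t" "0 \<le> h * cos t"
    using assms(4) by simp_all
  then show ?thesis
    using assms(3) by (auto simp: inner_quadrant_def inner_u_dir inner_v_dir algebra_simps)
qed

lemma convex_vertical_fibre_Diff:
  fixes K :: "(real \<times> real) set"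
  assumes "convex K" and down: "\<And>Q p h. Q \<in> \<Q> \<Longrightarrow> p \<in> Q \<Longrightarrow> 0 \<le> h \<Longrightarrow> p - (0, h) \<in> Q"
  shows "convex ((K - \<Union>\<Q>) \<inter> fst -` {a})"
proof (rule convexI)
  fix p r :: "real \<times> real" and u v :: real
  assume p: "p \<in> (K - \<Union>\<Q>) \<inter> fst -` {a}" and r: "r \<in> (K - \<Union>\<Q>) \<inter> fst -` {a}"
    and uv: "0 \<le> u" "0 \<le> v" "u + v = 1"
  define m where "m = u *\<^sub>R p + v *\<^sub>R r"
  have "m \<in> K"
    using convexD[OF assms(1)] p r uv unfolding m_def by blast
  have "fst m = (u + v) * a"
    using p r by (simp add: m_def distrib_right)
  then have "fst m = a"
    using uv(3) by simp
  have "u * min (snd p) (snd r) + v * min (snd p) (snd r) \<le> u * snd p + v * snd r"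
    using uv by (intro add_mono mult_left_mono) auto
  then have "min (snd p) (snd r) \<le> snd m"
    using uv(3) by (simp add: m_def flip: distrib_right)
  then obtain l where l: "l \<in> {p, r}" "snd l \<le> snd m"
    by (metis insertCI min_def)
  have "m \<notin> \<Union>\<Q>"
  proof
    assume "m \<in> \<Union>\<Q>"
    then obtain Q where "Q \<in> \<Q>" "m \<in> Q"
      by blast
    moreover have "l = m - (0, snd m - snd l)"
      using l(1) p r \<open>fst m = a\<close> by (auto simp: prod_eq_iff)
    ultimately have "l \<in> Q"
      using down l(2) by (metis diff_ge_0_iff_ge)
    with \<open>Q \<in> \<Q>\<close> l(1) p r show False
      by blast
  qed
  with \<open>m \<in> K\<close> \<open>fst m = a\<close> show "u *\<^sub>R p + v *\<^sub>R r \<in> (K - \<Union>\<Q>) \<inter> fst -` {a}"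
    by (simp add: m_def)
qed

lemma convex_monotonization_vertical_fibre:
  assumes "\<omega> \<le> pi / 2"
  shows "convex (monotonization S \<omega> \<inter> fst -` {a})"
proof -
  have down: "p - (0, h) \<in> Q" if "Q \<in> inner_quadrant S ` {0..\<omega>}" "p \<in> Q" "0 \<le> h" for Q p h
    using that assms by (auto intro: inner_quadrant_downward_closed)
  show ?thesis
    unfolding monotonization_eq_cap_Diff by (rule convex_vertical_fibre_Diff[OF convex_cap down])
qed

lemma convex_supporting_line_at_vertical_top:
  fixes K :: "(real \<times> real) set"
  assumes "convex K" "q \<in> K" and top: "\<And>k. k \<in> K \<Longrightarrow> fst k = fst q \<Longrightarrow> snd k \<le> snd q"
  obtains n where "n \<noteq> 0" "0 \<le> snd n" "\<And>k. k \<in> K \<Longrightarrow> n \<bullet> k \<le> n \<bullet> q"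
proof -
  define R where "R = {fst q} \<times> {snd q<..}"
  have "convex R" "R \<noteq> {}"
    by (auto simp: R_def intro!: convex_Times)
  moreover have "K \<inter> R = {}"
    using top by (force simp: R_def)
  ultimately obtain n b where "n \<noteq> 0" and below: "\<forall>k\<in>K. n \<bullet> k \<le> b" and above: "\<forall>r\<in>R. b \<le> n \<bullet> r"
    using separating_hyperplane_sets[OF assms(1)] assms(2) by blast
  have up: "b \<le> n \<bullet> q + e * snd n" if "0 < e" for e
  proof -
    have "q + (0, e) \<in> R"
      using that by (simp add: R_def mem_Times_iff)
    then have "b \<le> n \<bullet> (q + (0, e))"
      using above by blast
    then show ?thesis
      by (simp add: inner_prod_def algebra_simps)
  qed
  have "n \<bullet> q \<le> b"
    using below assms(2) by blast
  then have "0 \<le> snd n"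
    using up[of 1] by simp
  have "b \<le> n \<bullet> q"
  proof (rule field_le_epsilon)
    fix e :: real
    assume "0 < e"
    then have "b \<le> n \<bullet> q + e / (snd n + 1) * snd n"
      using \<open>0 \<le> snd n\<close> by (intro up) simp
    also have "e / (snd n + 1) * snd n \<le> e"
      using \<open>0 < e\<close> \<open>0 \<le> snd n\<close> by (simp add: field_simps)
    finally show "b \<le> n \<bullet> q + e"
      by simp
  qed
  then show thesis
    using below \<open>n \<noteq> 0\<close> \<open>0 \<le> snd n\<close> by (intro that) auto
qed

lemma inner_v_dir_nonneg_if_far_point_below:
  fixes n w :: "real \<times> real"
  assumes t: "0 \<le> t" "t \<le> pi / 2" and "0 \<le> snd n" "n \<bullet> w \<le> 0" "snd w \<le> 1"
    and far: "1 < w \<bullet> u_dir t"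
  shows "0 \<le> n \<bullet> v_dir t"
proof (rule ccontr)
  assume "\<not> 0 \<le> n \<bullet> v_dir t"
  then have neg: "0 < - (n \<bullet> v_dir t)"
    by simp
  have s: "0 \<le> sin t" "sin t \<le> 1" and c: "0 \<le> cos t"
    using t by (auto intro!: sin_ge_zero cos_ge_zero)
  have "0 \<le> snd n * cos t"
    using \<open>0 \<le> snd n\<close> c by simp
  then have "0 < fst n * sin t"
    using neg by (simp add: inner_v_dir)
  then have "0 < fst n"
    using s(1) by (simp add: zero_less_mult_iff)
  have "fst n * (w \<bullet> u_dir t) - snd w * - (n \<bullet> v_dir t) = cos t * (n \<bullet> w)"
    unfolding inner_u_dir inner_v_dir by (simp add: inner_prod_def algebra_simps)
  also have "\<dots> \<le> 0"
    using c \<open>n \<bullet> w \<le> 0\<close> by (rule mult_nonneg_nonpos)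
  finally have "fst n * (w \<bullet> u_dir t) \<le> snd w * - (n \<bullet> v_dir t)"
    by simp
  also have "\<dots> \<le> 1 * - (n \<bullet> v_dir t)"
    using \<open>snd w \<le> 1\<close> neg by (intro mult_right_mono) auto
  also have "\<dots> \<le> fst n * sin t"
    using \<open>0 \<le> snd n * cos t\<close> by (simp add: inner_v_dir)
  also have "\<dots> \<le> fst n * 1"
    using \<open>0 < fst n\<close> s(2) by (intro mult_left_mono) auto
  finally show False
    using \<open>0 < fst n\<close> far by simp
qed

lemma inner_u_dir_nonneg_if_far_point_below:
  fixes n e :: "real \<times> real"
  assumes t: "0 \<le> t" "t \<le> pi / 2" and "0 \<le> snd n" "n \<bullet> e \<le> 0" "snd e \<le> 1"
    and far: "1 < e \<bullet> v_dir t"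
  shows "0 \<le> n \<bullet> u_dir t"
proof (rule ccontr)
  assume "\<not> 0 \<le> n \<bullet> u_dir t"
  then have neg: "0 < - (n \<bullet> u_dir t)"
    by simp
  have s: "0 \<le> sin t" and c: "0 \<le> cos t" "cos t \<le> 1"
    using t by (auto intro!: sin_ge_zero cos_ge_zero)
  have "0 \<le> snd n * sin t"
    using \<open>0 \<le> snd n\<close> s by simp
  then have "0 < - fst n * cos t"
    using neg by (simp add: inner_u_dir)
  then have "0 < - fst n"
    using c(1) by (simp add: mult_less_0_iff)
  have "- fst n * (e \<bullet> v_dir t) - snd e * - (n \<bullet> u_dir t) = sin t * (n \<bullet> e)"
    unfolding inner_u_dir inner_v_dir by (simp add: inner_prod_def algebra_simps)
  also have "\<dots> \<le> 0"
    using s \<open>n \<bullet> e \<le> 0\<close> by (rule mult_nonneg_nonpos)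
  finally have "- fst n * (e \<bullet> v_dir t) \<le> snd e * - (n \<bullet> u_dir t)"
    by simp
  also have "\<dots> \<le> 1 * - (n \<bullet> u_dir t)"
    using \<open>snd e \<le> 1\<close> neg by (intro mult_right_mono) auto
  also have "\<dots> \<le> - fst n * cos t"
    using \<open>0 \<le> snd n * sin t\<close> by (simp add: inner_u_dir)
  also have "\<dots> \<le> - fst n * 1"
    using \<open>0 < - fst n\<close> c(2) by (intro mult_left_mono) auto
  finally show False
    using \<open>0 < - fst n\<close> far by simp
qed

lemma inner_pos_if_frame_coords_nonneg:
  fixes n z :: "real \<times> real"
  assumes "n \<noteq> 0" "0 \<le> n \<bullet> u_dir t" "0 \<le> n \<bullet> v_dir t" "0 < z \<bullet> u_dir t" "0 < z \<bullet> v_dir t"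
  shows "0 < n \<bullet> z"
proof -
  have "n \<bullet> z = ((n \<bullet> u_dir t) *\<^sub>R u_dir t + (n \<bullet> v_dir t) *\<^sub>R v_dir t) \<bullet> z"
    by (metis frame_expansion)
  also have "\<dots> = (n \<bullet> u_dir t) * (z \<bullet> u_dir t) + (n \<bullet> v_dir t) * (z \<bullet> v_dir t)"
    by (simp add: inner_add_left inner_commute[of "u_dir t"] inner_commute[of "v_dir t"])
  finally have "n \<bullet> z = (n \<bullet> u_dir t) * (z \<bullet> u_dir t) + (n \<bullet> v_dir t) * (z \<bullet> v_dir t)" .
  moreover have "0 < n \<bullet> u_dir t \<or> 0 < n \<bullet> v_dir t"
  proof (rule ccontr)
    assume "\<not> ?thesis"
    then have "n \<bullet> u_dir t = 0" "n \<bullet> v_dir t = 0"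
      using assms(2,3) by auto
    have "n = (n \<bullet> u_dir t) *\<^sub>R u_dir t + (n \<bullet> v_dir t) *\<^sub>R v_dir t"
      by (rule frame_expansion)
    also have "\<dots> = 0"
      using \<open>n \<bullet> u_dir t = 0\<close> \<open>n \<bullet> v_dir t = 0\<close> by simp
    finally show False
      using assms(1) by simp
  qed
  ultimately show ?thesis
    using assms(2-5) by (smt (verit) mult_nonneg_nonneg mult_pos_pos)
qed

lemma cap_vertical_top_notin_inner_quadrant:
  assumes S: "compact S" "S \<noteq> {}" "S \<subseteq> cap S \<omega>"
    and t: "0 \<le> t" "t \<le> pi / 2"
    and corner: "z \<in> S" "supp_fun S t - 1 \<le> z \<bullet> u_dir t" "supp_fun S (t + pi / 2) - 1 \<le> z \<bullet> v_dir t"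
    and q: "q \<in> cap S \<omega>" "\<And>k. k \<in> cap S \<omega> \<Longrightarrow> fst k = fst q \<Longrightarrow> snd k \<le> snd q"
  shows "q \<notin> inner_quadrant S t"
proof
  assume "q \<in> inner_quadrant S t"
  then have q_u: "q \<bullet> u_dir t < supp_fun S t - 1"
    and q_v: "q \<bullet> v_dir t < supp_fun S (t + pi / 2) - 1"
    by (simp_all add: inner_quadrant_def)
  obtain n where n: "n \<noteq> 0" "0 \<le> snd n" and supporting: "\<And>k. k \<in> cap S \<omega> \<Longrightarrow> n \<bullet> k \<le> n \<bullet> q"
    using convex_supporting_line_at_vertical_top[OF convex_cap q] by blast
  have below: "n \<bullet> (k - q) \<le> 0" if "k \<in> S" for k
    using supporting[of k] that S(3) by (auto simp: inner_diff_right)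
  have height: "snd (k - q) \<le> 1" if "k \<in> S" for k
    using that S(3) q(1) by (auto simp: cap_def mem_P_set_iff)
  obtain w where w: "w \<in> S" "w \<bullet> u_dir t = supp_fun S t"
    using supp_fun_attained[OF S(1,2)] .
  have "0 \<le> n \<bullet> v_dir t"
  proof (rule inner_v_dir_nonneg_if_far_point_below[OF t n(2) below[OF w(1)] height[OF w(1)]])
    show "1 < (w - q) \<bullet> u_dir t"
      using w(2) q_u by (simp add: inner_diff_left)
  qed
  obtain e where e: "e \<in> S" "e \<bullet> u_dir (t + pi / 2) = supp_fun S (t + pi / 2)"
    using supp_fun_attained[OF S(1,2)] .
  have "0 \<le> n \<bullet> u_dir t"
  proof (rule inner_u_dir_nonneg_if_far_point_below[OF t n(2) below[OF e(1)] height[OF e(1)]])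
    show "1 < (e - q) \<bullet> v_dir t"
      using e(2) q_v by (simp add: inner_diff_left u_dir_add_pi_half)
  qed
  have "0 < n \<bullet> (z - q)"
  proof (rule inner_pos_if_frame_coords_nonneg[OF n(1) \<open>0 \<le> n \<bullet> u_dir t\<close> \<open>0 \<le> n \<bullet> v_dir t\<close>])
    show "0 < (z - q) \<bullet> u_dir t" "0 < (z - q) \<bullet> v_dir t"
      using corner(2,3) q_u q_v by (simp_all add: inner_diff_left)
  qed
  with below[OF corner(1)] show False
    by simp
qed

lemma fst_monotonization_eq_fst_cap:
  assumes \<omega>: "0 < \<omega>" "\<omega> \<le> pi / 2"
    and S: "connected S" "compact S" "S \<noteq> {}" "S \<subseteq> monotonization S \<omega>"
  shows "fst ` monotonization S \<omega> = fst ` cap S \<omega>"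
proof
  show "fst ` monotonization S \<omega> \<subseteq> fst ` cap S \<omega>"
    unfolding monotonization_eq_cap_Diff by blast
  have "S \<subseteq> cap S \<omega>"
    using S(4) unfolding monotonization_eq_cap_Diff by blast
  show "fst ` cap S \<omega> \<subseteq> fst ` monotonization S \<omega>"
  proof
    fix a
    assume "a \<in> fst ` cap S \<omega>"
    define F where "F = cap S \<omega> \<inter> {p. fst p = a}"
    have "compact F"
      unfolding F_def using compact_cap[OF \<omega>]
      by (intro compact_Int_closed closed_Collect_eq continuous_intros)
    then have "compact (snd ` F)"
      by (intro compact_continuous_image continuous_intros)
    moreover have "F \<noteq> {}"
      using \<open>a \<in> fst ` cap S \<omega>\<close> by (auto simp: F_def)
    ultimately obtain q where "q \<in> F" and top: "\<And>k. k \<in> F \<Longrightarrow> snd k \<le> snd q"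
      using compact_attains_sup[of "snd ` F"] by auto
    then have "q \<in> cap S \<omega>" "fst q = a"
      by (auto simp: F_def)
    have "q \<notin> inner_quadrant S t" if t: "t \<in> {0..\<omega>}" for t
    proof -
      have "S \<subseteq> L_S S t"
        using S(4) t unfolding monotonization_def by blast
      then obtain z where "z \<in> S" "supp_fun S t - 1 \<le> z \<bullet> u_dir t"
          "supp_fun S (t + pi / 2) - 1 \<le> z \<bullet> v_dir t"
        using connected_subset_L_S_meets_corner[OF S(1-3)] by metis
      then show ?thesis
        using t \<omega> top \<open>q \<in> cap S \<omega>\<close> \<open>fst q = a\<close>
        by (intro cap_vertical_top_notin_inner_quadrant[OF S(2,3) \<open>S \<subseteq> cap S \<omega>\<close>]) (auto simp: F_def)
    qed
    with \<open>q \<in> cap S \<omega>\<close> \<open>fst q = a\<close> show "a \<in> fst ` monotonization S \<omega>"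
      unfolding monotonization_eq_cap_Diff by blast
  qed
qed

lemma connected_if_fst_fibres_connected:
  fixes M :: "('a::t2_space \<times> 'b::t2_space) set"
  assumes "compact M" "connected (fst ` M)" "\<And>a. a \<in> fst ` M \<Longrightarrow> connected (M \<inter> fst -` {a})"
  shows "connected M"
proof -
  have "connected (M \<inter> fst -` fst ` M)"
  proof (rule connected_closed_monotone_preimage[where T = "fst ` M"])
    show "continuous_on M fst"
      by (intro continuous_intros)
    show "closedin (top_of_set (fst ` M)) (fst ` C)" if "closedin (top_of_set M) C" for C
      by (rule Abstract_Topology_2.continuous_imp_closed_map[OF that \<open>continuous_on M fst\<close> refl assms(1)])
  qed (use assms(2,3) in auto)
  then show ?thesis
    by (simp add: Int_absorb2 subset_vimage_iff)
qed

theorem theorem3p7: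
  fixes S :: "(real \<times> real) set" and \<omega> :: real
  assumes "0 < \<omega>" and "\<omega> \<le> pi / 2"
    and "moving_sofa S \<omega>"
    and "standard_position S \<omega>"
  shows "connected (monotonization S \<omega>)"
proof (rule connected_if_fst_fibres_connected)
  have S: "connected S" "compact S" "S \<noteq> {}"
    using assms(3) by (simp_all add: moving_sofa_def)
  have "fst ` monotonization S \<omega> = fst ` cap S \<omega>"
    using assms(1,2) S moving_sofa_subset_monotonization[OF assms(3,4)]
    by (rule fst_monotonization_eq_fst_cap)
  then show "connected (fst ` monotonization S \<omega>)"
    using convex_linear_image[OF linear_fst convex_cap] by (simp add: convex_connected)
  show "compact (monotonization S \<omega>)"
    using assms(1,2) by (rule compact_monotonization)
  show "connected (monotonization S \<omega> \<inter> fst -` {a})" for a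
    using assms(2) by (intro convex_connected convex_monotonization_vertical_fibre)
qed

end
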